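(* Let $\gamma=(\gamma_1,\dots,\gamma_b)$ be a parallel map on $V=V_1\oplus\cdots\oplus V_b$, $V_i\cong(\mathbb F_2)^m$, with $0\gamma=0$. Let $U,U'$ be subspaces of $V$ of dimension $n-1$ with $J_U\cap J_{U'}=\emptyset$. Suppose that for every $i\notin J_U\cup J_{U'}$, $\gamma_i$ is differentially $2^r$-uniform with $r<m$ and strongly $(r-1)$-anti-invariant, and for every $j\in J_U\cup J_{U'}$, $\gamma_j$ is differentially $2^r$-uniform with $r<m-1$ and strongly $r$-anti-invariant. If $\gamma$ maps $\mathcal{LA}_U(W_1|W_2)$ onto a non-trivial partition $\mathcal{LA}_{U'}(W_1'|W_2')$, then $W_1,W_1',W_2,W_2'$ are walls and $W_1=W_1'=W_2=W_2'$; in particular both partitions are linear.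
   Context: Let $m,b>1$, $n=mb$, $V=(\mathbb F_2)^n=V_1\oplus\cdots\oplus V_b$, $V_i\cong(\mathbb F_2)^m$. Permutations act on the right. A parallel map is $\gamma\in\mathrm{Sym}(V)$ with $(v_1\oplus\cdots\oplus v_b)\gamma=v_1\gamma_1\oplus\cdots\oplus v_b\gamma_b$, $\gamma_i\in\mathrm{Sym}(V_i)$. A wall is $\bigoplus_{i\in I}V_i$ with $\emptyset\ne I\subsetneq\{1,\dots,b\}$. $J_U=\{j:V_j\cap U\subsetneq V_j\}$. $f:(\mathbb F_2)^m\to(\mathbb F_2)^m$ is differentially $\delta$-uniform if $\delta=\max_{a\ne0,b}|\{x:f(x+a)+f(x)=b\}|$; for $f(0)=0$, $f$ is strongly $s$-anti-invariant if for all subspaces $A,B$ with $f(A)=B$, either $\dim A=\dim B<m-s$ or $A=B=(\mathbb F_2)^m$. A permutation maps $\mathcal A$ onto $\mathcal B$ if it sends the blocks of $\mathcal A$ exactly onto those of $\mathcal B$; trivial partitions are the singleton partition and $\{V\}$. $\mathcal L(W)=\{W+v:v\in V\}$. For subspaces $W_1,W_2\subseteq U$, $\mathcal{LA}_U(W_1|W_2)=\{W_1+v:v\in U\}\cup\{(W_2+\bar v)+v:v\in U\}$ for any $\bar v\in V\setminus U$. *)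

theory Defs
  imports Main
begin

text \<open>A vector over F_2 with coordinates in I is a function to bool (True = 1)
  vanishing outside I. Addition is coordinatewise xor.\<close>

definition vecs :: "'a set \<Rightarrow> ('a \<Rightarrow> bool) set" where
  "vecs I = {x. \<forall>k. k \<notin> I \<longrightarrow> \<not> x k}"

definition vzero :: "'a \<Rightarrow> bool" where
  "vzero = (\<lambda>_. False)"

definition vadd :: "('a \<Rightarrow> bool) \<Rightarrow> ('a \<Rightarrow> bool) \<Rightarrow> ('a \<Rightarrow> bool)" where
  "vadd x y = (\<lambda>k. x k \<noteq> y k)"

definition f2_subspace :: "'a set \<Rightarrow> ('a \<Rightarrow> bool) set \<Rightarrow> bool" where
  "f2_subspace I U \<longleftrightarrow> U \<subseteq> vecs I \<and> vzero \<in> U \<and> (\<forall>x\<in>U. \<forall>y\<in>U. vadd x y \<in> U)"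

definition f2_span :: "('a \<Rightarrow> bool) set \<Rightarrow> ('a \<Rightarrow> bool) set" where
  "f2_span S = \<Inter> {W. vzero \<in> W \<and> (\<forall>x\<in>W. \<forall>y\<in>W. vadd x y \<in> W) \<and> S \<subseteq> W}"

definition f2_dim :: "('a \<Rightarrow> bool) set \<Rightarrow> nat" where
  "f2_dim U = (LEAST k. \<exists>B. finite B \<and> B \<subseteq> U \<and> card B = k \<and> f2_span B = U)"

definition coset :: "('a \<Rightarrow> bool) set \<Rightarrow> ('a \<Rightarrow> bool) \<Rightarrow> ('a \<Rightarrow> bool) set" where
  "coset W v = (\<lambda>w. vadd w v) ` W"

text \<open>V = (F_2)^n with n = m*b, coordinates (i,j), block i < b, position j < m.
  The blocks are indexed 0..b-1.\<close>

abbreviation VV :: "nat \<Rightarrow> nat \<Rightarrow> (nat \<times> nat \<Rightarrow> bool) set" where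
  "VV m b \<equiv> vecs ({..<b} \<times> {..<m})"

abbreviation blockV :: "nat \<Rightarrow> nat \<Rightarrow> (nat \<times> nat \<Rightarrow> bool) set" where
  "blockV m i \<equiv> vecs ({i} \<times> {..<m})"

definition comp :: "nat \<Rightarrow> (nat \<times> nat \<Rightarrow> bool) \<Rightarrow> nat \<Rightarrow> (nat \<Rightarrow> bool)" where
  "comp m x i = (\<lambda>j. j < m \<and> x (i, j))"

definition par_map :: "nat \<Rightarrow> nat \<Rightarrow> (nat \<Rightarrow> (nat \<Rightarrow> bool) \<Rightarrow> (nat \<Rightarrow> bool))
    \<Rightarrow> (nat \<times> nat \<Rightarrow> bool) \<Rightarrow> (nat \<times> nat \<Rightarrow> bool)" where
  "par_map m b g x = (\<lambda>(i, j). i < b \<and> j < m \<and> g i (comp m x i) j)"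

definition is_wall :: "nat \<Rightarrow> nat \<Rightarrow> (nat \<times> nat \<Rightarrow> bool) set \<Rightarrow> bool" where
  "is_wall m b W \<longleftrightarrow> (\<exists>I. I \<noteq> {} \<and> I \<subset> {..<b} \<and> W = vecs (I \<times> {..<m}))"

definition J_set :: "nat \<Rightarrow> nat \<Rightarrow> (nat \<times> nat \<Rightarrow> bool) set \<Rightarrow> nat set" where
  "J_set m b U = {j. j < b \<and> blockV m j \<inter> U \<subset> blockV m j}"

definition diff_unif :: "nat \<Rightarrow> ((nat \<Rightarrow> bool) \<Rightarrow> (nat \<Rightarrow> bool)) \<Rightarrow> nat" where
  "diff_unif m f = Max {card {x \<in> vecs {..<m}. vadd (f (vadd x a)) (f x) = c} | a c.
      a \<in> vecs {..<m} \<and> a \<noteq> vzero \<and> c \<in> vecs {..<m}}"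

definition diff_uniform :: "nat \<Rightarrow> ((nat \<Rightarrow> bool) \<Rightarrow> (nat \<Rightarrow> bool)) \<Rightarrow> nat \<Rightarrow> bool" where
  "diff_uniform m f \<delta> \<longleftrightarrow> diff_unif m f = \<delta>"

definition strongly_anti_invariant :: "nat \<Rightarrow> ((nat \<Rightarrow> bool) \<Rightarrow> (nat \<Rightarrow> bool)) \<Rightarrow> nat \<Rightarrow> bool" where
  "strongly_anti_invariant m f s \<longleftrightarrow>
     (\<forall>A B. f2_subspace {..<m} A \<longrightarrow> f2_subspace {..<m} B \<longrightarrow> f ` A = B \<longrightarrow>
        (f2_dim A = f2_dim B \<and> f2_dim B < m - s) \<or> (A = vecs {..<m} \<and> B = vecs {..<m}))"

definition maps_onto :: "('x \<Rightarrow> 'x) \<Rightarrow> 'x set set \<Rightarrow> 'x set set \<Rightarrow> bool" where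
  "maps_onto f \<A> \<B> \<longleftrightarrow> (\<lambda>A. f ` A) ` \<A> = \<B>"

definition trivial_partition :: "'x set \<Rightarrow> 'x set set \<Rightarrow> bool" where
  "trivial_partition S P \<longleftrightarrow> P = {{x} | x. x \<in> S} \<or> P = {S}"

definition lin_part :: "nat \<Rightarrow> nat \<Rightarrow> (nat \<times> nat \<Rightarrow> bool) set \<Rightarrow> (nat \<times> nat \<Rightarrow> bool) set set" where
  "lin_part m b W = {coset W v | v. v \<in> VV m b}"

definition LA :: "nat \<Rightarrow> nat \<Rightarrow> (nat \<times> nat \<Rightarrow> bool) set \<Rightarrow> (nat \<times> nat \<Rightarrow> bool) set
    \<Rightarrow> (nat \<times> nat \<Rightarrow> bool) set \<Rightarrow> (nat \<times> nat \<Rightarrow> bool) set set" where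
  "LA m b U W1 W2 = (let vb = (SOME vb. vb \<in> VV m b - U) in
     {coset W1 v | v. v \<in> U} \<union> {coset (coset W2 vb) v | v. v \<in> U})"

end

theory Submission
  imports Defs
begin

text \<open>Since the complement of the hyperplane U is a single coset of U, the blocks of
  LA_U(W1|W2) are the cosets W1 + x for x in U and W2 + x for x outside U. Hence gamma maps
  W1 + x onto W1' + gamma x whenever x \<in> U and gamma x \<in> U', i.e. the derivatives of gamma at
  such x in the directions of W1 lie in W1'. In a block V_i these points x make up all of V_i,
  or at least half of it when i lies in J_U or J_U'. If W1 contains a nonzero vector of V_i,
  counting these points against the differential uniformity 2^r of gamma_i shows that the
  projection of W1' to V_i is too large for the first alternative of strong anti-invariance,
  so W1 contains V_i. The same count shows that W1 has no component in the remaining blocks,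
  so W1 is a wall. Parallel maps permute the cosets of a wall, and comparing the images of
  the blocks on both sides of U and U' gives W1 = W1' = W2 = W2'.\<close>

lemma vadd_commute: "vadd x y = vadd y x"
  unfolding vadd_def by auto

lemma vadd_assoc: "vadd (vadd x y) z = vadd x (vadd y z)"
  unfolding vadd_def by auto

lemma vadd_self [simp]: "vadd x x = vzero"
  unfolding vadd_def vzero_def by auto

lemma vadd_vzero [simp]: "vadd x vzero = x" "vadd vzero x = x"
  unfolding vadd_def vzero_def by auto

lemma vadd_cancel [simp]:
  "vadd (vadd x y) y = x" "vadd x (vadd x y) = y" "vadd (vadd x y) x = y" "vadd y (vadd x y) = x"
  unfolding vadd_def by auto

lemma vadd_eq_vzero_iff: "vadd x y = vzero \<longleftrightarrow> x = y"
  unfolding vadd_def vzero_def by (auto simp: fun_eq_iff)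

lemma vadd_in_vecs: "x \<in> vecs I \<Longrightarrow> y \<in> vecs I \<Longrightarrow> vadd x y \<in> vecs I"
  unfolding vecs_def vadd_def by auto

lemma vzero_in_vecs [simp]: "vzero \<in> vecs I"
  unfolding vecs_def vzero_def by auto

lemma vecs_mono: "I \<subseteq> J \<Longrightarrow> vecs I \<subseteq> vecs J"
  unfolding vecs_def by auto

lemma vecs_empty: "vecs {} = {vzero}"
  unfolding vecs_def vzero_def by auto

lemma bij_betw_vecs_Pow: "bij_betw (\<lambda>x. {k. x k}) (vecs I) (Pow I)"
proof (rule bij_betw_imageI)
  show "inj_on (\<lambda>x. {k. x k}) (vecs I)"
    by (auto simp: inj_on_def fun_eq_iff)
  show "(\<lambda>x. {k. x k}) ` vecs I = Pow I"
  proof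
    show "Pow I \<subseteq> (\<lambda>x. {k. x k}) ` vecs I"
      by (auto simp: vecs_def intro!: image_eqI[where x = "\<lambda>k. k \<in> _"])
  qed (auto simp: vecs_def)
qed

lemma finite_vecs: "finite I \<Longrightarrow> finite (vecs I)"
  using bij_betw_finite[OF bij_betw_vecs_Pow, of I] by simp

lemma card_vecs: "finite I \<Longrightarrow> card (vecs I) = 2 ^ card I"
  using bij_betw_same_card[OF bij_betw_vecs_Pow] card_Pow by metis

lemma f2_subspace_vzero: "f2_subspace I U \<Longrightarrow> vzero \<in> U"
  unfolding f2_subspace_def by blast

lemma f2_subspace_vadd: "f2_subspace I U \<Longrightarrow> x \<in> U \<Longrightarrow> y \<in> U \<Longrightarrow> vadd x y \<in> U"
  unfolding f2_subspace_def by blast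

lemma f2_subspace_subset: "f2_subspace I U \<Longrightarrow> U \<subseteq> vecs I"
  unfolding f2_subspace_def by blast

lemma finite_f2_subspace: "f2_subspace I U \<Longrightarrow> finite I \<Longrightarrow> finite U"
  using finite_subset[OF f2_subspace_subset finite_vecs] .

lemma f2_subspace_vecs: "J \<subseteq> I \<Longrightarrow> f2_subspace I (vecs J)"
  unfolding f2_subspace_def using vecs_mono vadd_in_vecs by auto

lemma mem_coset_iff: "y \<in> coset W v \<longleftrightarrow> vadd y v \<in> W"
  unfolding coset_def by (auto simp: image_iff) (metis vadd_cancel(1))

lemma coset_vzero [simp]: "coset W vzero = W"
  unfolding coset_def by simp

lemma coset_singleton_vzero: "coset {vzero} x = {x}"
  unfolding coset_def by simp

lemma card_coset: "card (coset W v) = card W"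
  unfolding coset_def by (rule card_image) (auto simp: inj_on_def dest: arg_cong[where f = "\<lambda>z. vadd z v"])

lemma finite_coset: "finite W \<Longrightarrow> finite (coset W v)"
  unfolding coset_def by simp

lemma coset_coset: "coset (coset W u) v = coset W (vadd u v)"
  by (auto simp: mem_coset_iff vadd_assoc) (metis vadd_commute)+

lemma coset_cancel_right: "coset A v = coset B v \<Longrightarrow> A = B"
  by (metis coset_coset vadd_self coset_vzero)

lemma coset_subset_vecs: "W \<subseteq> vecs I \<Longrightarrow> x \<in> vecs I \<Longrightarrow> coset W x \<subseteq> vecs I"
  unfolding coset_def using vadd_in_vecs by blast

lemma mem_coset_self: "f2_subspace I W \<Longrightarrow> v \<in> coset W v"
  by (simp add: mem_coset_iff f2_subspace_vzero)

lemma coset_eq_if_mem: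
  assumes "f2_subspace I W" "y \<in> coset W v"
  shows "coset W y = coset W v"
proof -
  have yv: "vadd y v \<in> W"
    using assms(2) mem_coset_iff by blast
  have "vadd z y \<in> W \<longleftrightarrow> vadd z v \<in> W" for z
    using f2_subspace_vadd[OF assms(1) _ yv, of "vadd z y"] f2_subspace_vadd[OF assms(1) _ yv, of "vadd z v"]
    by (metis vadd_assoc vadd_cancel(1,2) vadd_commute)
  then show ?thesis
    by (auto simp: mem_coset_iff)
qed

lemma coset_subset_subspace:
  assumes "f2_subspace I U" "W \<subseteq> U" "v \<in> U"
  shows "coset W v \<subseteq> U"
  using assms f2_subspace_vadd[OF assms(1), of _ v] by (auto simp: mem_coset_iff) (metis subsetD vadd_cancel(1))

lemma coset_disjoint_subspace:
  assumes "f2_subspace I U" "v \<notin> U"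
  shows "coset U v \<inter> U = {}"
  using assms f2_subspace_vadd[OF assms(1)] by (auto simp: mem_coset_iff) (metis vadd_cancel(2))

lemma span_vzero: "vzero \<in> f2_span S"
  unfolding f2_span_def by auto

lemma span_vadd: "x \<in> f2_span S \<Longrightarrow> y \<in> f2_span S \<Longrightarrow> vadd x y \<in> f2_span S"
  unfolding f2_span_def by auto

lemma span_superset: "S \<subseteq> f2_span S"
  unfolding f2_span_def by auto

lemma span_minimal:
  "vzero \<in> W \<Longrightarrow> (\<forall>x\<in>W. \<forall>y\<in>W. vadd x y \<in> W) \<Longrightarrow> S \<subseteq> W \<Longrightarrow> f2_span S \<subseteq> W"
  unfolding f2_span_def by auto

lemma span_subset_subspace: "f2_subspace I U \<Longrightarrow> S \<subseteq> U \<Longrightarrow> f2_span S \<subseteq> U"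
  unfolding f2_subspace_def by (rule span_minimal) auto

lemma span_empty: "f2_span {} = {vzero}"
  using span_minimal[of "{vzero}" "{}"] span_vzero by auto

lemma span_insert: "f2_span (insert x S) = f2_span S \<union> coset (f2_span S) x"
proof
  show "f2_span (insert x S) \<subseteq> f2_span S \<union> coset (f2_span S) x"
  proof (rule span_minimal)
    show "vzero \<in> f2_span S \<union> coset (f2_span S) x"
      using span_vzero by blast
    show "insert x S \<subseteq> f2_span S \<union> coset (f2_span S) x"
      using span_superset span_vzero by (auto simp: mem_coset_iff)
    have "vadd u v \<in> f2_span S \<or> vadd (vadd u v) x \<in> f2_span S"
      if "u \<in> f2_span S \<or> vadd u x \<in> f2_span S" "v \<in> f2_span S \<or> vadd v x \<in> f2_span S" for u v
      using that span_vadd[of u S "vadd v x"] span_vadd[of "vadd u x" S v]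
        span_vadd[of "vadd u x" S "vadd v x"] span_vadd[of u S v]
      by (metis vadd_assoc vadd_cancel(1) vadd_commute)
    then show "\<forall>u\<in>f2_span S \<union> coset (f2_span S) x. \<forall>v\<in>f2_span S \<union> coset (f2_span S) x.
        vadd u v \<in> f2_span S \<union> coset (f2_span S) x"
      by (simp add: mem_coset_iff)
  qed
  have "f2_span S \<subseteq> f2_span (insert x S)"
    by (rule span_minimal) (use span_superset[of "insert x S"] in \<open>auto intro: span_vzero span_vadd\<close>)
  moreover have "vadd (vadd y x) x \<in> f2_span (insert x S)" if "vadd y x \<in> f2_span (insert x S)" for y
    using that span_vadd span_superset by blast
  ultimately show "f2_span S \<union> coset (f2_span S) x \<subseteq> f2_span (insert x S)"
    by (auto simp: mem_coset_iff)
qed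

lemma card_span_le: "finite S \<Longrightarrow> finite (f2_span S) \<and> card (f2_span S) \<le> 2 ^ card S"
proof (induction S rule: finite_induct)
  case empty
  then show ?case by (simp add: span_empty)
next
  case (insert x F)
  have "card (f2_span (insert x F)) \<le> card (f2_span F) + card (coset (f2_span F) x)"
    unfolding span_insert by (rule card_Un_le)
  then show ?case
    using insert by (simp add: span_insert card_coset finite_coset)
qed

lemma card_span_insert:
  assumes "finite (f2_span S)" "x \<notin> f2_span S"
  shows "card (f2_span (insert x S)) = 2 * card (f2_span S)"
proof -
  have "f2_span S \<inter> coset (f2_span S) x = {}"
    using assms(2) span_vadd[of _ S] by (auto simp: mem_coset_iff) (metis vadd_cancel(2))
  then show ?thesis
    unfolding span_insert by (simp add: card_Un_disjoint assms finite_coset card_coset)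
qed

text \<open>Greedily adjoin vectors outside the current span; each step doubles its size.\<close>
lemma exists_f2_basis:
  assumes U: "f2_subspace I U" "finite U"
  shows "\<exists>B. finite B \<and> B \<subseteq> U \<and> f2_span B = U \<and> card U = 2 ^ card B"
proof -
  have "\<exists>B. finite B \<and> B \<subseteq> U \<and> f2_span B = U \<and> card U = 2 ^ card B"
    if "finite S" "S \<subseteq> U" "card (f2_span S) = 2 ^ card S" "card U - card (f2_span S) = k" for k S
    using that
  proof (induction k arbitrary: S rule: less_induct)
    case (less k S)
    have span_S: "f2_span S \<subseteq> U"
      using span_subset_subspace[OF U(1) less.prems(2)] .
    show ?case
    proof (cases "f2_span S = U")
      case True
      then show ?thesis using less.prems by auto
    next
      case False
      then obtain x where x: "x \<in> U" "x \<notin> f2_span S"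
        using span_S by blast
      have fin: "finite (f2_span S)"
        using U(2) span_S finite_subset by blast
      have card_insert: "card (f2_span (insert x S)) = 2 * card (f2_span S)"
        using card_span_insert[OF fin x(2)] .
      moreover have "x \<notin> S"
        using x span_superset by blast
      moreover have "card (f2_span (insert x S)) \<le> card U"
        using card_mono[OF U(2)] span_subset_subspace[OF U(1)] less.prems(2) x(1) by simp
      moreover have "card (f2_span S) > 0"
        using fin span_vzero by (auto simp: card_gt_0_iff)
      ultimately have "card U - card (f2_span (insert x S)) < k"
        using less.prems(4) by linarith
      moreover have "card (f2_span (insert x S)) = 2 ^ card (insert x S)"
        using card_insert less.prems \<open>x \<notin> S\<close> by simp
      ultimately show ?thesis
        using less.IH[of _ "insert x S"] less.prems(1,2) x(1) by blast
    qed
  qed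
  from this[of "{}"] show ?thesis
    by (simp add: span_empty)
qed

lemma card_f2_subspace:
  assumes U: "f2_subspace I U" "finite U"
  shows "card U = 2 ^ f2_dim U"
proof -
  obtain B where B: "finite B" "B \<subseteq> U" "f2_span B = U" "card U = 2 ^ card B"
    using exists_f2_basis[OF U] by blast
  let ?spans = "\<lambda>k. \<exists>B. finite B \<and> B \<subseteq> U \<and> card B = k \<and> f2_span B = U"
  have "f2_dim U \<le> card B"
    unfolding f2_dim_def by (rule Least_le) (use B in blast)
  moreover obtain B0 where "finite B0" "card B0 = f2_dim U" "f2_span B0 = U"
    using LeastI_ex[of ?spans] B unfolding f2_dim_def by blast
  then have "card U \<le> 2 ^ f2_dim U"
    using card_span_le by metis
  ultimately show ?thesis
    using B(4) power_increasing[of "f2_dim U" "card B" "2::nat"] by simp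
qed

lemma f2_hyperplane_Un_coset:
  assumes U: "f2_subspace I U" "finite I" "I \<noteq> {}" "f2_dim U = card I - 1"
    and v: "v \<in> vecs I" "v \<notin> U"
  shows "U \<union> coset U v = vecs I"
proof (rule card_subset_eq[OF finite_vecs[OF U(2)]])
  have fin: "finite U"
    using finite_f2_subspace U(1,2) .
  have "card (U \<union> coset U v) = 2 ^ (card I - 1) + 2 ^ (card I - 1)"
    using card_Un_disjoint[OF fin finite_coset[OF fin]] coset_disjoint_subspace[OF U(1) v(2)]
      card_f2_subspace[OF U(1) fin] U(4) card_coset[of U v] by (simp add: Int_commute)
  also have "\<dots> = card (vecs I)"
    using U(2,3) card_vecs[OF U(2)] by (cases "card I") auto
  finally show "card (U \<union> coset U v) = card (vecs I)" .
  show "U \<union> coset U v \<subseteq> vecs I"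
    using f2_subspace_subset[OF U(1)] coset_subset_vecs v(1) by blast
qed

lemma f2_hyperplane_proper:
  assumes U: "f2_subspace I U" "finite I" "I \<noteq> {}" "f2_dim U = card I - 1"
  shows "\<exists>v\<in>vecs I. v \<notin> U"
proof -
  have "card U = 2 ^ (card I - 1)"
    using card_f2_subspace[OF U(1) finite_f2_subspace[OF U(1,2)]] U(4) by simp
  also have "\<dots> < card (vecs I)"
    using U(2,3) card_vecs[OF U(2)] by (simp add: card_gt_0_iff)
  finally show ?thesis
    using card_mono[OF finite_f2_subspace[OF U(1,2)]] by (meson not_le subsetI)
qed

lemma f2_hyperplane_vadd_outside:
  assumes U: "f2_subspace I U" "finite I" "I \<noteq> {}" "f2_dim U = card I - 1"
    and "x \<in> vecs I - U" "y \<in> vecs I - U"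
  shows "vadd x y \<in> U"
  using f2_hyperplane_Un_coset[OF U, of x] assms(5,6) by (auto simp: mem_coset_iff vadd_commute)

lemma card_le_twice_Int_f2_hyperplane:
  assumes U: "f2_subspace I U" "finite I" "I \<noteq> {}" "f2_dim U = card I - 1"
    and S: "f2_subspace I S" "\<not> S \<subseteq> U"
  shows "card S \<le> 2 * card (S \<inter> U)"
proof -
  obtain e where e: "e \<in> S" "e \<notin> U"
    using S(2) by blast
  have "vadd y e \<in> S \<inter> U" if "y \<in> S - U" for y
    using that e f2_hyperplane_vadd_outside[OF U] f2_subspace_vadd[OF S(1)] f2_subspace_subset[OF S(1)]
    by blast
  then have "S \<subseteq> (S \<inter> U) \<union> coset (S \<inter> U) e"
    by (fastforce simp: mem_coset_iff)
  moreover have "finite S"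
    using finite_f2_subspace[OF S(1) U(2)] .
  ultimately have "card S \<le> card (S \<inter> U) + card (coset (S \<inter> U) e)"
    by (meson card_Un_le card_mono finite_Int finite_UnI finite_coset order_trans)
  then show ?thesis
    by (simp add: card_coset)
qed

lemma card_le_mult_card_if_fibres_le:
  assumes "finite Y" "f ` X \<subseteq> Y" "\<And>c. c \<in> Y \<Longrightarrow> card {x\<in>X. f x = c} \<le> d"
  shows "card X \<le> d * card Y"
proof -
  have "X = (\<Union>c\<in>Y. {x\<in>X. f x = c})"
    using assms(2) by blast
  then have "card X \<le> (\<Sum>c\<in>Y. card {x\<in>X. f x = c})"
    using card_UN_le[OF assms(1)] by metis
  also have "\<dots> \<le> d * card Y"
    using sum_bounded_above[of Y "\<lambda>c. card {x\<in>X. f x = c}" d] assms(3) by (simp add: mult.commute)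
  finally show ?thesis .
qed

definition f2_deriv :: "(('a \<Rightarrow> bool) \<Rightarrow> ('b \<Rightarrow> bool)) \<Rightarrow> ('a \<Rightarrow> bool) \<Rightarrow> ('a \<Rightarrow> bool) \<Rightarrow> ('b \<Rightarrow> bool)"
  where "f2_deriv f a x = vadd (f (vadd x a)) (f x)"

lemma card_deriv_fibre_le_diff_unif:
  assumes "a \<in> vecs {..<m}" "a \<noteq> vzero" "c \<in> vecs {..<m}"
  shows "card {x \<in> vecs {..<m}. f2_deriv f a x = c} \<le> diff_unif m f"
  unfolding diff_unif_def f2_deriv_def
proof (rule Max_ge)
  show "finite {card {x \<in> vecs {..<m}. vadd (f (vadd x a)) (f x) = c} | a c.
      a \<in> vecs {..<m} \<and> a \<noteq> vzero \<and> c \<in> vecs {..<m}}"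
    by (rule finite_subset[of _ "{..card (vecs {..<m::nat})}"]) (auto intro!: card_mono finite_vecs)
qed (use assms in blast)

lemma comp_in_vecs: "comp m x i \<in> vecs {..<m}"
  unfolding comp_def vecs_def by auto

lemma comp_vadd: "comp m (vadd x y) i = vadd (comp m x i) (comp m y i)"
  unfolding comp_def vadd_def by auto

lemma comp_vzero [simp]: "comp m vzero i = vzero"
  unfolding comp_def vzero_def by auto

lemma VV_eqI:
  assumes "x \<in> VV m b" "y \<in> VV m b" "\<And>i. i < b \<Longrightarrow> comp m x i = comp m y i"
  shows "x = y"
proof (rule ext, clarify)
  fix i j
  show "x (i, j) = y (i, j)"
    using assms fun_cong[OF assms(3)[of i], of j] unfolding vecs_def comp_def
    by (cases "i < b \<and> j < m") auto
qed

lemma mem_wall_iff: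
  assumes "I \<subseteq> {..<b}"
  shows "z \<in> vecs (I \<times> {..<m}) \<longleftrightarrow> z \<in> VV m b \<and> (\<forall>i<b. i \<notin> I \<longrightarrow> comp m z i = vzero)"
  using assms unfolding vecs_def comp_def vzero_def fun_eq_iff by auto blast

lemma mem_blockV_iff:
  "i < b \<Longrightarrow> x \<in> blockV m i \<longleftrightarrow> x \<in> VV m b \<and> (\<forall>j<b. j \<noteq> i \<longrightarrow> comp m x j = vzero)"
  using mem_wall_iff[of "{i}" b] by auto

lemma blockV_subset_VV: "i < b \<Longrightarrow> blockV m i \<subseteq> VV m b"
  by (rule vecs_mono) auto

lemma finite_blockV: "finite (blockV m i)"
  by (simp add: finite_vecs)

lemma card_blockV: "card (blockV m i) = 2 ^ m"
  by (simp add: card_vecs card_cartesian_product)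

lemma inj_on_comp_blockV: "inj_on (\<lambda>x. comp m x i) (blockV m i)"
proof (rule inj_onI, rule ext, clarify)
  fix x y k j
  assume "x \<in> blockV m i" "y \<in> blockV m i" "comp m x i = comp m y i"
  then show "x (k, j) = y (k, j)"
    unfolding vecs_def comp_def by (cases "k = i \<and> j < m") (auto dest: fun_cong[where x = j])
qed

lemma comp_blockV_neq_vzero: "a \<in> blockV m i \<Longrightarrow> a \<noteq> vzero \<Longrightarrow> comp m a i \<noteq> vzero"
  by (metis comp_vzero inj_onD inj_on_comp_blockV vzero_in_vecs)

lemma wall_subset_if_blockV_subset:
  assumes W: "f2_subspace S W" and K: "finite K" "\<And>i. i \<in> K \<Longrightarrow> blockV m i \<subseteq> W"
  shows "vecs (K \<times> {..<m}) \<subseteq> W"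
  using K
proof (induction K rule: finite_induct)
  case empty
  then show ?case using f2_subspace_vzero[OF W] by (simp add: vecs_empty)
next
  case (insert i K)
  show ?case
  proof
    fix x assume x: "x \<in> vecs (insert i K \<times> {..<m})"
    let ?rest = "\<lambda>(k, j). k \<noteq> i \<and> x (k, j)" and ?part = "\<lambda>(k, j). k = i \<and> x (k, j)"
    have "?rest \<in> vecs (K \<times> {..<m})" "?part \<in> blockV m i"
      using x by (auto simp: vecs_def)
    moreover have "vecs (K \<times> {..<m}) \<subseteq> W" "blockV m i \<subseteq> W"
      using insert.IH insert.prems by auto
    ultimately have "vadd ?rest ?part \<in> W"
      using f2_subspace_vadd[OF W] by blast
    moreover have "vadd ?rest ?part = x"
      by (auto simp: vadd_def fun_eq_iff)
    ultimately show "x \<in> W"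
      by simp
  qed
qed

definition block_proj :: "nat \<Rightarrow> nat \<Rightarrow> (nat \<times> nat \<Rightarrow> bool) set \<Rightarrow> (nat \<Rightarrow> bool) set"
  where "block_proj m i W = (\<lambda>x. comp m x i) ` (W \<inter> blockV m i)"

lemma f2_subspace_block_proj:
  assumes W: "f2_subspace S W"
  shows "f2_subspace {..<m} (block_proj m i W)"
  unfolding f2_subspace_def block_proj_def
proof (intro conjI ballI)
  show "(\<lambda>x. comp m x i) ` (W \<inter> blockV m i) \<subseteq> vecs {..<m}"
    using comp_in_vecs by blast
  have "vzero \<in> W \<inter> blockV m i"
    using f2_subspace_vzero[OF W] by simp
  then show "vzero \<in> (\<lambda>x. comp m x i) ` (W \<inter> blockV m i)"
    by (rule image_eqI[rotated]) simp
next
  fix x y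
  assume "x \<in> (\<lambda>x. comp m x i) ` (W \<inter> blockV m i)" "y \<in> (\<lambda>x. comp m x i) ` (W \<inter> blockV m i)"
  then obtain x' y' where "x' \<in> W \<inter> blockV m i" "y' \<in> W \<inter> blockV m i" "x = comp m x' i" "y = comp m y' i"
    by blast
  moreover from this have "vadd x' y' \<in> W \<inter> blockV m i"
    using f2_subspace_vadd[OF W] vadd_in_vecs by blast
  ultimately show "vadd x y \<in> (\<lambda>x. comp m x i) ` (W \<inter> blockV m i)"
    by (auto simp: comp_vadd intro!: image_eqI[of _ _ "vadd x' y'"])
qed

lemma card_block_proj: "card (block_proj m i W) = card (W \<inter> blockV m i)"
  unfolding block_proj_def by (rule card_image) (rule inj_on_subset[OF inj_on_comp_blockV], blast)

lemma blockV_subset_if_block_proj_full: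
  assumes "block_proj m i W = vecs {..<m}"
  shows "blockV m i \<subseteq> W"
proof
  fix y assume y: "y \<in> blockV m i"
  have "comp m y i \<in> block_proj m i W"
    unfolding assms by (rule comp_in_vecs)
  then obtain x where x: "comp m y i = comp m x i" "x \<in> W \<inter> blockV m i"
    unfolding block_proj_def by (rule imageE)
  then have "x = y"
    using inj_onD[OF inj_on_comp_blockV, of m x i y] x y by simp
  then show "y \<in> W"
    using x by blast
qed

locale parallel_perm =
  fixes m b :: nat and g :: "nat \<Rightarrow> (nat \<Rightarrow> bool) \<Rightarrow> (nat \<Rightarrow> bool)"
  assumes bij_g: "\<And>i. i < b \<Longrightarrow> bij_betw (g i) (vecs {..<m}) (vecs {..<m})"
    and par_map_vzero: "par_map m b g vzero = vzero"
begin

abbreviation \<gamma> where "\<gamma> \<equiv> par_map m b g"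

lemma comp_par_map:
  assumes "i < b"
  shows "comp m (\<gamma> x) i = g i (comp m x i)"
proof -
  have "g i (comp m x i) \<in> vecs {..<m}"
    using bij_betwE[OF bij_g[OF assms]] comp_in_vecs by blast
  then show ?thesis
    using assms unfolding comp_def par_map_def vecs_def by (auto simp: fun_eq_iff)
qed

lemma g_vzero: "i < b \<Longrightarrow> g i vzero = vzero"
  using comp_par_map[of i vzero] par_map_vzero by simp

lemma comp_par_map_eq_iff: "i < b \<Longrightarrow> comp m (\<gamma> x) i = comp m (\<gamma> y) i \<longleftrightarrow> comp m x i = comp m y i"
  using bij_betw_imp_inj_on[OF bij_g] comp_par_map comp_in_vecs by (metis inj_onD)

lemma par_map_in_VV: "\<gamma> x \<in> VV m b"
  unfolding par_map_def vecs_def by auto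

lemma inj_on_par_map: "inj_on \<gamma> (VV m b)"
proof (rule inj_onI)
  fix x y assume "x \<in> VV m b" "y \<in> VV m b" "\<gamma> x = \<gamma> y"
  then show "x = y"
    using comp_par_map_eq_iff by (metis VV_eqI)
qed

lemma par_map_VV: "\<gamma> ` VV m b = VV m b"
  using endo_inj_surj[OF finite_vecs _ inj_on_par_map] par_map_in_VV by blast

lemma par_map_blockV: "i < b \<Longrightarrow> \<gamma> ` blockV m i = blockV m i"
proof (rule endo_inj_surj[OF finite_blockV])
  assume i: "i < b"
  show "\<gamma> ` blockV m i \<subseteq> blockV m i"
    using mem_blockV_iff[OF i] par_map_in_VV comp_par_map g_vzero by auto
  show "inj_on \<gamma> (blockV m i)"
    using inj_on_subset[OF inj_on_par_map blockV_subset_VV[OF i]] .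
qed

lemma par_map_wall_coset:
  assumes I: "I \<subseteq> {..<b}" and x: "x \<in> VV m b"
  shows "\<gamma> ` coset (vecs (I \<times> {..<m})) x = coset (vecs (I \<times> {..<m})) (\<gamma> x)"
proof -
  have mem_iff: "y \<in> coset (vecs (I \<times> {..<m})) z \<longleftrightarrow> y \<in> VV m b \<and> (\<forall>i<b. i \<notin> I \<longrightarrow> comp m y i = comp m z i)"
    if "z \<in> VV m b" for y z
    using that vadd_in_vecs[OF _ that] mem_wall_iff[OF I, of "vadd y z"]
    by (auto simp: mem_coset_iff comp_vadd vadd_eq_vzero_iff) (metis vadd_cancel(1))
  show ?thesis
  proof
    show "\<gamma> ` coset (vecs (I \<times> {..<m})) x \<subseteq> coset (vecs (I \<times> {..<m})) (\<gamma> x)"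
      using mem_iff x par_map_in_VV comp_par_map by auto
    show "coset (vecs (I \<times> {..<m})) (\<gamma> x) \<subseteq> \<gamma> ` coset (vecs (I \<times> {..<m})) x"
    proof
      fix z assume "z \<in> coset (vecs (I \<times> {..<m})) (\<gamma> x)"
      moreover obtain y where "y \<in> VV m b" "z = \<gamma> y"
        using calculation mem_iff[OF par_map_in_VV] par_map_VV by blast
      ultimately show "z \<in> \<gamma> ` coset (vecs (I \<times> {..<m})) x"
        using mem_iff[OF par_map_in_VV] mem_iff[OF x] comp_par_map_eq_iff by auto
    qed
  qed
qed

lemma comp_deriv_par_map:
  "j < b \<Longrightarrow> comp m (f2_deriv \<gamma> a x) j = f2_deriv (g j) (comp m a j) (comp m x j)"
  by (simp add: f2_deriv_def comp_vadd comp_par_map)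

lemma deriv_par_map_in_blockV:
  assumes "i < b" "x \<in> blockV m i" "a \<in> blockV m i"
  shows "f2_deriv \<gamma> a x \<in> blockV m i"
  using assms par_map_blockV[OF assms(1)] vadd_in_vecs unfolding f2_deriv_def by blast

text \<open>Off block i the derivative only sees the (zero) components of x and y there.\<close>
lemma vadd_deriv_par_map_in_blockV:
  assumes i: "i < b" and x: "x \<in> blockV m i" and y: "y \<in> blockV m i"
  shows "vadd (f2_deriv \<gamma> a x) (f2_deriv \<gamma> a y) \<in> blockV m i"
proof -
  have "comp m x j = comp m y j" if "j < b" "j \<noteq> i" for j
    using x y that mem_blockV_iff[OF i] by simp
  then have "comp m (f2_deriv \<gamma> a x) j = comp m (f2_deriv \<gamma> a y) j" if "j < b" "j \<noteq> i" for j
    using that comp_deriv_par_map by simp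
  moreover have "vadd (f2_deriv \<gamma> a x) (f2_deriv \<gamma> a y) \<in> VV m b"
    unfolding f2_deriv_def by (intro vadd_in_vecs par_map_in_VV)
  ultimately show ?thesis
    by (simp add: mem_blockV_iff[OF i] comp_vadd vadd_eq_vzero_iff)
qed

lemma card_deriv_par_map_fibre_le:
  assumes i: "i < b" and a: "comp m a i \<noteq> vzero" and X: "X \<subseteq> blockV m i"
  shows "card {x\<in>X. f2_deriv \<gamma> a x = c} \<le> diff_unif m (g i)"
proof -
  let ?fibre = "{x\<in>X. f2_deriv \<gamma> a x = c}"
  have "inj_on (\<lambda>x. comp m x i) ?fibre"
    using inj_on_subset[OF inj_on_comp_blockV subset_trans[OF Collect_restrict X]] .
  moreover have "(\<lambda>x. comp m x i) ` ?fibre \<subseteq> {y \<in> vecs {..<m}. f2_deriv (g i) (comp m a i) y = comp m c i}"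
    using comp_deriv_par_map[OF i] comp_in_vecs by auto
  ultimately have "card ?fibre \<le> card {y \<in> vecs {..<m}. f2_deriv (g i) (comp m a i) y = comp m c i}"
    by (rule card_inj_on_le) (simp add: finite_vecs)
  also have "\<dots> \<le> diff_unif m (g i)"
    by (rule card_deriv_fibre_le_diff_unif[OF comp_in_vecs a comp_in_vecs])
  finally show ?thesis .
qed

lemma deriv_par_map_neq_vzero:
  "i < b \<Longrightarrow> comp m a i \<noteq> vzero \<Longrightarrow> f2_deriv \<gamma> a x \<noteq> vzero"
  using comp_deriv_par_map[of i a x] bij_betw_imp_inj_on[OF bij_g] comp_in_vecs vadd_in_vecs
  unfolding f2_deriv_def by (metis comp_vzero inj_onD vadd_cancel(2) vadd_eq_vzero_iff)

lemma par_map_Int_blockV: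
  assumes "i < b" "W \<subseteq> VV m b"
  shows "\<gamma> ` (W \<inter> blockV m i) = \<gamma> ` W \<inter> blockV m i"
  using inj_on_image_Int[OF inj_on_par_map assms(2) blockV_subset_VV[OF assms(1)]] par_map_blockV[OF assms(1)]
  by simp

lemma g_image_block_proj:
  assumes "i < b" "W \<subseteq> VV m b"
  shows "g i ` block_proj m i W = block_proj m i (\<gamma> ` W)"
proof -
  have "g i ` block_proj m i W = (\<lambda>x. comp m (\<gamma> x) i) ` (W \<inter> blockV m i)"
    unfolding block_proj_def image_image using comp_par_map[OF assms(1)] by simp
  also have "\<dots> = block_proj m i (\<gamma> ` W)"
    unfolding block_proj_def par_map_Int_blockV[OF assms, symmetric] image_image ..
  finally show ?thesis .
qed

end

definition la_block :: "('a \<Rightarrow> bool) set \<Rightarrow> ('a \<Rightarrow> bool) set \<Rightarrow> ('a \<Rightarrow> bool) set \<Rightarrow> ('a \<Rightarrow> bool) \<Rightarrow> ('a \<Rightarrow> bool) set"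
  where "la_block U W1 W2 x = (if x \<in> U then coset W1 x else coset W2 x)"

lemma mem_la_block_self: "f2_subspace I W1 \<Longrightarrow> f2_subspace I W2 \<Longrightarrow> x \<in> la_block U W1 W2 x"
  unfolding la_block_def using mem_coset_self by auto

lemma la_block_eq_if_mem:
  assumes U: "f2_subspace I U"
    and W: "f2_subspace I W1" "W1 \<subseteq> U" "f2_subspace I W2" "W2 \<subseteq> U"
    and y: "y \<in> la_block U W1 W2 z"
  shows "la_block U W1 W2 y = la_block U W1 W2 z"
proof (cases "z \<in> U")
  case True
  then have "y \<in> coset W1 z"
    using y by (simp add: la_block_def)
  moreover from this have "y \<in> U"
    using coset_subset_subspace[OF U W(2) True] by blast
  ultimately show ?thesis
    using True coset_eq_if_mem[OF W(1)] by (simp add: la_block_def)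
next
  case False
  then have yz: "y \<in> coset W2 z"
    using y by (simp add: la_block_def)
  then have "y \<notin> U"
    using False f2_subspace_vadd[OF U, of y "vadd y z"] W(4) by (auto simp: mem_coset_iff)
  then show ?thesis
    using False coset_eq_if_mem[OF W(3) yz] by (simp add: la_block_def)
qed

lemma LA_eq_image_la_block:
  assumes U: "f2_subspace ({..<b} \<times> {..<m}) U" "{..<b} \<times> {..<m} \<noteq> {}"
      "f2_dim U = card ({..<b} \<times> {..<m}) - 1"
  shows "LA m b U W1 W2 = la_block U W1 W2 ` VV m b"
proof -
  note hyperplane = U(1) finite_cartesian_product[OF finite_lessThan finite_lessThan] U(2,3)
  define v where "v = (SOME v. v \<in> VV m b - U)"
  have v: "v \<in> VV m b" "v \<notin> U"
    using someI_ex[of "\<lambda>v. v \<in> VV m b - U"] f2_hyperplane_proper[OF hyperplane] unfolding v_def by blast+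
  have "LA m b U W1 W2 = {coset W1 u | u. u \<in> U} \<union> {coset W2 (vadd v u) | u. u \<in> U}"
    unfolding LA_def Let_def v_def[symmetric] coset_coset ..
  also have "\<dots> = la_block U W1 W2 ` VV m b"
  proof (intro equalityI subsetI)
    fix X assume "X \<in> {coset W1 u | u. u \<in> U} \<union> {coset W2 (vadd v u) | u. u \<in> U}"
    then obtain u where u: "u \<in> U" "X = coset W1 u \<or> X = coset W2 (vadd v u)"
      by blast
    have "vadd v u \<in> VV m b - U"
      using u(1) v vadd_in_vecs f2_subspace_subset[OF U(1)] f2_subspace_vadd[OF U(1), of "vadd v u" u]
      by auto
    then show "X \<in> la_block U W1 W2 ` VV m b"
      using u f2_subspace_subset[OF U(1)] unfolding la_block_def by force
  next
    fix X assume "X \<in> la_block U W1 W2 ` VV m b"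
    then obtain x where x: "x \<in> VV m b" "X = la_block U W1 W2 x"
      by blast
    show "X \<in> {coset W1 u | u. u \<in> U} \<union> {coset W2 (vadd v u) | u. u \<in> U}"
    proof (cases "x \<in> U")
      case True
      then show ?thesis using x by (auto simp: la_block_def)
    next
      case False
      then have "vadd v x \<in> U"
        using x v f2_hyperplane_vadd_outside[OF hyperplane] by blast
      moreover have "X = coset W2 (vadd v (vadd v x))"
        using x False by (simp add: la_block_def)
      ultimately show ?thesis by blast
    qed
  qed
  finally show ?thesis .
qed

lemma LA_eq_lin_part:
  assumes "f2_subspace ({..<b} \<times> {..<m}) U" "{..<b} \<times> {..<m} \<noteq> {}"
      "f2_dim U = card ({..<b} \<times> {..<m}) - 1"
  shows "LA m b U W W = lin_part m b W"
  unfolding LA_eq_image_la_block[OF assms] lin_part_def la_block_def by auto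

locale LA_correspondence = parallel_perm +
  fixes U U' W1 W2 W1' W2' :: "(nat \<times> nat \<Rightarrow> bool) set"
  assumes m_pos: "0 < m" and b_pos: "0 < b"
    and U: "f2_subspace ({..<b} \<times> {..<m}) U" "f2_dim U = m * b - 1"
    and U': "f2_subspace ({..<b} \<times> {..<m}) U'" "f2_dim U' = m * b - 1"
    and W: "f2_subspace ({..<b} \<times> {..<m}) W1" "W1 \<subseteq> U"
           "f2_subspace ({..<b} \<times> {..<m}) W2" "W2 \<subseteq> U"
    and W': "f2_subspace ({..<b} \<times> {..<m}) W1'" "W1' \<subseteq> U'"
           "f2_subspace ({..<b} \<times> {..<m}) W2'" "W2' \<subseteq> U'"
    and maps: "maps_onto \<gamma> (LA m b U W1 W2) (LA m b U' W1' W2')"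
begin

lemma coordinates_nonempty: "{..<b} \<times> {..<m} \<noteq> {}"
  using m_pos b_pos by auto

lemma dim_hyperplanes:
  "f2_dim U = card ({..<b} \<times> {..<m}) - 1" "f2_dim U' = card ({..<b} \<times> {..<m}) - 1"
  using U(2) U'(2) by (simp_all add: card_cartesian_product mult.commute)

lemmas hyperplane_U = U(1) finite_cartesian_product[OF finite_lessThan finite_lessThan]
  coordinates_nonempty dim_hyperplanes(1)

lemmas hyperplane_U' = U'(1) finite_cartesian_product[OF finite_lessThan finite_lessThan]
  coordinates_nonempty dim_hyperplanes(2)

lemma exists_blockV_not_subset_U: "\<exists>i<b. \<not> blockV m i \<subseteq> U"
proof (rule ccontr)
  assume "\<not> (\<exists>i<b. \<not> blockV m i \<subseteq> U)"
  then have "VV m b \<subseteq> U"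
    using wall_subset_if_blockV_subset[OF U(1), of "{..<b}"] by blast
  then show False
    using f2_hyperplane_proper[OF hyperplane_U] by blast
qed

lemma par_map_la_block:
  assumes x: "x \<in> VV m b"
  shows "\<gamma> ` la_block U W1 W2 x = la_block U' W1' W2' (\<gamma> x)"
proof -
  have "(\<lambda>A. \<gamma> ` A) ` la_block U W1 W2 ` VV m b = la_block U' W1' W2' ` VV m b"
    using maps unfolding maps_onto_def
    by (simp add: LA_eq_image_la_block[OF U(1) coordinates_nonempty dim_hyperplanes(1)]
        LA_eq_image_la_block[OF U'(1) coordinates_nonempty dim_hyperplanes(2)])
  moreover have "\<gamma> ` la_block U W1 W2 x \<in> (\<lambda>A. \<gamma> ` A) ` la_block U W1 W2 ` VV m b"
    using x by (intro imageI)
  ultimately obtain z where "\<gamma> ` la_block U W1 W2 x = la_block U' W1' W2' z"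
    by (metis imageE)
  moreover have "\<gamma> x \<in> \<gamma> ` la_block U W1 W2 x"
    using mem_la_block_self[OF W(1,3)] by blast
  ultimately show ?thesis
    using la_block_eq_if_mem[OF U'(1) W'] by metis
qed

lemma par_map_W1: "\<gamma> ` W1 = W1'"
  using par_map_la_block[of vzero] f2_subspace_vzero[OF U(1)] f2_subspace_vzero[OF U'(1)]
  by (simp add: la_block_def par_map_vzero)

lemma deriv_par_map_in_W1':
  assumes x: "x \<in> U" "\<gamma> x \<in> U'" and a: "a \<in> W1"
  shows "f2_deriv \<gamma> a x \<in> W1'"
proof -
  have "vadd x a \<in> la_block U W1 W2 x"
    using x a by (simp add: la_block_def mem_coset_iff)
  then have "\<gamma> (vadd x a) \<in> coset W1' (\<gamma> x)"
    using par_map_la_block x f2_subspace_subset[OF U(1)] by (fastforce simp: la_block_def)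
  then show ?thesis
    by (simp add: mem_coset_iff f2_deriv_def)
qed

lemma card_par_map_U: "card (\<gamma> ` U) = card U'"
  using card_image[OF inj_on_subset[OF inj_on_par_map f2_subspace_subset[OF U(1)]]] U(2) U'(2)
    card_f2_subspace[OF U(1) finite_f2_subspace[OF hyperplane_U(1,2)]]
    card_f2_subspace[OF U'(1) finite_f2_subspace[OF hyperplane_U'(1,2)]]
  by simp

lemma exists_U_par_map_notin_U':
  assumes "\<gamma> ` U \<noteq> U'"
  shows "\<exists>x\<in>U. \<gamma> x \<notin> U'"
proof (rule ccontr)
  assume "\<not> (\<exists>x\<in>U. \<gamma> x \<notin> U')"
  then have "\<gamma> ` U \<subseteq> U'"
    by auto
  then show False
    using assms card_subset_eq[OF finite_f2_subspace[OF hyperplane_U'(1,2)]] card_par_map_U by blast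
qed

lemma exists_notin_U_par_map_in_U':
  assumes "\<gamma> ` U \<noteq> U'"
  shows "\<exists>x\<in>VV m b - U. \<gamma> x \<in> U'"
proof (rule ccontr)
  assume none: "\<not> (\<exists>x\<in>VV m b - U. \<gamma> x \<in> U')"
  have "U' \<subseteq> \<gamma> ` U"
  proof
    fix y assume y: "y \<in> U'"
    then have "y \<in> \<gamma> ` VV m b"
      using par_map_VV f2_subspace_subset[OF U'(1)] by auto
    then obtain x where "x \<in> VV m b" "y = \<gamma> x"
      by (rule imageE)
    then show "y \<in> \<gamma> ` U"
      using none y by auto
  qed
  then show False
    using assms card_subset_eq[OF finite_imageI[OF finite_f2_subspace[OF hyperplane_U(1,2)]]]
      card_par_map_U by metis
qed

lemma W1_neq_vzero_if_nontrivial: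
  assumes nontrivial: "\<not> trivial_partition (VV m b) (LA m b U' W1' W2')" and moves: "\<gamma> ` U \<noteq> U'"
  shows "W1 \<noteq> {vzero}"
proof
  assume W1: "W1 = {vzero}"
  then have W1': "W1' = {vzero}"
    using par_map_W1 par_map_vzero by auto
  obtain x where x: "x \<in> U" "\<gamma> x \<notin> U'"
    using exists_U_par_map_notin_U'[OF moves] by blast
  then have "coset W2' (\<gamma> x) = coset {vzero} (\<gamma> x)"
    using par_map_la_block[of x] W1 f2_subspace_subset[OF U(1)]
    by (auto simp: la_block_def coset_singleton_vzero)
  then have "W2' = {vzero}"
    by (rule coset_cancel_right)
  then have "LA m b U' W1' W2' = {{y} | y. y \<in> VV m b}"
    using LA_eq_image_la_block[OF U'(1) coordinates_nonempty dim_hyperplanes(2)] W1'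
    by (auto simp: la_block_def coset_singleton_vzero)
  then show False
    using nontrivial unfolding trivial_partition_def by blast
qed

lemma walls_eq_if_W1_wall:
  assumes wall: "I \<subseteq> {..<b}" "W1 = vecs (I \<times> {..<m})" and moves: "\<gamma> ` U \<noteq> U'"
  shows "W1' = W1" "W2' = W1" "W2 = W1"
proof -
  have par_map_coset: "\<gamma> ` coset W1 x = coset W1 (\<gamma> x)" if "x \<in> VV m b" for x
    using par_map_wall_coset[OF wall(1) that] wall(2) by simp
  show W1': "W1' = W1"
    using par_map_W1 par_map_coset[of vzero] par_map_vzero by simp
  obtain x where x: "x \<in> U" "\<gamma> x \<notin> U'"
    using exists_U_par_map_notin_U'[OF moves] by blast
  then have "coset W1 (\<gamma> x) = coset W2' (\<gamma> x)"
    using par_map_la_block[of x] par_map_coset[of x] f2_subspace_subset[OF U(1)]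
    by (auto simp: la_block_def)
  then show "W2' = W1"
    by (metis coset_cancel_right)
  obtain y where y: "y \<in> VV m b" "y \<notin> U" "\<gamma> y \<in> U'"
    using exists_notin_U_par_map_in_U'[OF moves] by blast
  then have "\<gamma> ` coset W2 y = \<gamma> ` coset W1 y"
    using par_map_la_block[of y] par_map_coset[of y] W1' by (simp add: la_block_def)
  moreover have "coset W2 y \<subseteq> VV m b" "coset W1 y \<subseteq> VV m b"
    using coset_subset_vecs[OF f2_subspace_subset y(1)] W(1,3) by blast+
  ultimately have "coset W2 y = coset W1 y"
    using inj_on_image_eq_iff[OF inj_on_par_map] by blast
  then show "W2 = W1"
    by (rule coset_cancel_right)
qed

end

lemma mem_J_set_iff: "i \<in> J_set m b X \<longleftrightarrow> i < b \<and> \<not> blockV m i \<subseteq> X"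
  unfolding J_set_def by blast

lemma pow_mult_pred_less_pow:
  assumes "d \<le> k"
  shows "(2::nat) ^ r * (2 ^ d - 1) < 2 ^ (r + k)"
proof -
  have "(2::nat) ^ r * (2 ^ d - 1) < 2 ^ r * 2 ^ d"
    by simp
  also have "\<dots> \<le> 2 ^ (r + k)"
    using assms by (simp add: power_add[symmetric])
  finally show ?thesis .
qed

locale sbox_setting = LA_correspondence +
  assumes m_gt_1: "1 < m"
    and J_disjoint: "J_set m b U \<inter> J_set m b U' = {}"
    and outside: "\<forall>i<b. i \<notin> J_set m b U \<union> J_set m b U' \<longrightarrow>
        (\<exists>r. r < m \<and> diff_uniform m (g i) (2 ^ r) \<and> strongly_anti_invariant m (g i) (r - 1))"
    and inside: "\<forall>j\<in>J_set m b U \<union> J_set m b U'.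
        (\<exists>r. r < m - 1 \<and> diff_uniform m (g j) (2 ^ r) \<and> strongly_anti_invariant m (g j) r)"
    and nontrivial: "\<not> trivial_partition (VV m b) (LA m b U' W1' W2')"
begin

lemma blockV_subset_U'_if_in_J_U:
  assumes "i \<in> J_set m b U"
  shows "blockV m i \<subseteq> U'"
proof -
  have "i \<notin> J_set m b U'"
    using assms J_disjoint by blast
  then show ?thesis
    using assms by (simp add: mem_J_set_iff)
qed

lemma par_map_U_neq_U': "\<gamma> ` U \<noteq> U'"
proof
  assume eq: "\<gamma> ` U = U'"
  obtain i where i: "i < b" "\<not> blockV m i \<subseteq> U"
    using exists_blockV_not_subset_U by blast
  then have "blockV m i \<subseteq> U'"
    using blockV_subset_U'_if_in_J_U by (simp add: mem_J_set_iff)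
  have "blockV m i \<subseteq> U"
  proof
    fix y assume y: "y \<in> blockV m i"
    then have "\<gamma> y \<in> \<gamma> ` U"
      using par_map_blockV[OF i(1)] eq \<open>blockV m i \<subseteq> U'\<close> by (metis image_eqI subsetD)
    then show "y \<in> U"
      using inj_on_image_mem_iff[OF inj_on_par_map _ f2_subspace_subset[OF U(1)]]
        y blockV_subset_VV[OF i(1)] by (meson subsetD)
  qed
  then show False
    using i(2) by blast
qed

text \<open>The points of block i at which deriv_par_map_in_W1' applies.\<close>
definition Z :: "nat \<Rightarrow> (nat \<times> nat \<Rightarrow> bool) set"
  where "Z i = {x \<in> blockV m i. x \<in> U \<and> \<gamma> x \<in> U'}"

lemma block_subspace: "i < b \<Longrightarrow> f2_subspace ({..<b} \<times> {..<m}) (blockV m i)"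
  by (rule f2_subspace_vecs) auto

lemma Z_subset_blockV: "Z i \<subseteq> blockV m i"
  unfolding Z_def by blast

lemma Z_eq_blockV_if_notin_J:
  assumes i: "i < b" "i \<notin> J_set m b U \<union> J_set m b U'"
  shows "Z i = blockV m i"
  using i par_map_blockV[OF i(1)] unfolding Z_def by (auto simp: mem_J_set_iff)

lemma card_Z_if_in_J:
  assumes i: "i < b" "i \<in> J_set m b U \<union> J_set m b U'"
  shows "2 ^ m \<le> 2 * card (Z i)"
proof (cases "i \<in> J_set m b U")
  case True
  then have "blockV m i \<subseteq> U'"
    by (rule blockV_subset_U'_if_in_J_U)
  then have "Z i = blockV m i \<inter> U"
    using par_map_blockV[OF i(1)] unfolding Z_def by auto
  moreover have "\<not> blockV m i \<subseteq> U"
    using True by (simp add: mem_J_set_iff)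
  ultimately show ?thesis
    using card_le_twice_Int_f2_hyperplane[OF hyperplane_U block_subspace[OF i(1)]] card_blockV by simp
next
  case False
  then have J': "i \<in> J_set m b U'" "blockV m i \<subseteq> U"
    using i False by (auto simp: mem_J_set_iff)
  then have "Z i = {x \<in> blockV m i. \<gamma> x \<in> U'}"
    unfolding Z_def by auto
  then have "\<gamma> ` Z i = blockV m i \<inter> U'"
    using par_map_blockV[OF i(1)] by auto
  moreover have "inj_on \<gamma> (Z i)"
    using inj_on_subset[OF inj_on_par_map subset_trans[OF Z_subset_blockV blockV_subset_VV[OF i(1)]]] .
  ultimately have "card (Z i) = card (blockV m i \<inter> U')"
    using card_image by metis
  moreover have "\<not> blockV m i \<subseteq> U'"
    using J'(1) by (simp add: mem_J_set_iff)
  ultimately show ?thesis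
    using card_le_twice_Int_f2_hyperplane[OF hyperplane_U' block_subspace[OF i(1)]] card_blockV by simp
qed

text \<open>The two kinds of hypotheses on the S-boxes, in the single form the counting arguments use.\<close>
lemma sbox_exponents:
  assumes i: "i < b"
  obtains r s where "diff_unif m (g i) = 2 ^ r" "strongly_anti_invariant m (g i) s"
    "s + 1 < m" "2 ^ (r + (m - s - 1)) \<le> card (Z i)"
proof (cases "i \<in> J_set m b U \<union> J_set m b U'")
  case True
  then obtain r where r: "r < m - 1" "diff_uniform m (g i) (2 ^ r)" "strongly_anti_invariant m (g i) r"
    using inside by blast
  have "2 * 2 ^ (r + (m - r - 1)) \<le> 2 * card (Z i)"
    using card_Z_if_in_J[OF i True] r(1) by (simp add: power_Suc[symmetric] del: power_Suc)
  then show ?thesis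
    using that[of r r] r unfolding diff_uniform_def by simp
next
  case False
  then obtain r where r: "r < m" "diff_uniform m (g i) (2 ^ r)" "strongly_anti_invariant m (g i) (r - 1)"
    using outside i by blast
  have "(2::nat) ^ (r + (m - (r - 1) - 1)) \<le> 2 ^ m"
    using r(1) by (intro power_increasing) (cases r, auto)
  then show ?thesis
    using that[of r "r - 1"] r m_gt_1 Z_eq_blockV_if_notin_J[OF i False] card_blockV
    unfolding diff_uniform_def by (cases r) auto
qed

lemma card_Z_le_deriv_range:
  assumes i: "i < b" and a: "a \<in> W1 \<inter> blockV m i" "a \<noteq> vzero"
  shows "card (Z i) \<le> diff_unif m (g i) * (card (W1' \<inter> blockV m i) - 1)"
proof -
  have a_i: "comp m a i \<noteq> vzero"
    using comp_blockV_neq_vzero a by blast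
  have "card (Z i) \<le> diff_unif m (g i) * card (W1' \<inter> blockV m i - {vzero})"
  proof (rule card_le_mult_card_if_fibres_le)
    show "finite (W1' \<inter> blockV m i - {vzero})"
      using finite_blockV by blast
    show "f2_deriv \<gamma> a ` Z i \<subseteq> W1' \<inter> blockV m i - {vzero}"
      using deriv_par_map_in_W1' deriv_par_map_in_blockV[OF i] deriv_par_map_neq_vzero[OF i a_i] a(1)
      unfolding Z_def by auto
    show "card {x \<in> Z i. f2_deriv \<gamma> a x = c} \<le> diff_unif m (g i)" for c
      by (rule card_deriv_par_map_fibre_le[OF i a_i Z_subset_blockV])
  qed
  moreover have "vzero \<in> W1' \<inter> blockV m i"
    using f2_subspace_vzero[OF W'(1)] by simp
  ultimately show ?thesis
    using finite_blockV by (simp add: card_Diff_singleton)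
qed

text \<open>The counting bound rules out the first alternative of strong anti-invariance for the
  projections of W1 \<inter> V_i and W1' \<inter> V_i, which leaves the second one.\<close>
lemma blockV_subset_W1_if_nonzero:
  assumes i: "i < b" and a: "a \<in> W1 \<inter> blockV m i" "a \<noteq> vzero"
  shows "blockV m i \<subseteq> W1"
proof -
  obtain r s where rs: "diff_unif m (g i) = 2 ^ r" "strongly_anti_invariant m (g i) s"
      "s + 1 < m" "2 ^ (r + (m - s - 1)) \<le> card (Z i)"
    by (rule sbox_exponents[OF i])
  let ?P = "block_proj m i W1" and ?P' = "block_proj m i W1'"
  have P': "f2_subspace {..<m} ?P'"
    using f2_subspace_block_proj[OF W'(1)] .
  have "card (Z i) \<le> 2 ^ r * (2 ^ f2_dim ?P' - 1)"
    using card_Z_le_deriv_range[OF i a] rs(1) card_block_proj[of m i W1']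
      card_f2_subspace[OF P' finite_f2_subspace[OF P']] by simp
  then have "\<not> f2_dim ?P' < m - s"
    using pow_mult_pred_less_pow[of "f2_dim ?P'" "m - s - 1" r] rs(4) by linarith
  moreover have "g i ` ?P = ?P'"
    using g_image_block_proj[OF i f2_subspace_subset[OF W(1)]] par_map_W1 by simp
  ultimately have "?P = vecs {..<m}"
    using rs(2) f2_subspace_block_proj[OF W(1)] P' unfolding strongly_anti_invariant_def by blast
  then show ?thesis
    by (rule blockV_subset_if_block_proj_full)
qed

lemma deriv_par_map_not_constant_on_Z:
  assumes i: "i < b" and a: "comp m a i \<noteq> vzero"
  shows "\<exists>x\<in>Z i. \<exists>y\<in>Z i. f2_deriv \<gamma> a x \<noteq> f2_deriv \<gamma> a y"
proof -
  obtain r s where rs: "diff_unif m (g i) = 2 ^ r" "strongly_anti_invariant m (g i) s"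
      "s + 1 < m" "2 ^ (r + (m - s - 1)) \<le> card (Z i)"
    by (rule sbox_exponents[OF i])
  moreover have "(2::nat) ^ r < 2 ^ (r + (m - s - 1))"
    using rs(3) by (intro power_strict_increasing) auto
  ultimately have big: "diff_unif m (g i) < card (Z i)"
    by linarith
  then obtain x0 where x0: "x0 \<in> Z i"
    by (metis card.empty ex_in_conv not_less_zero)
  show ?thesis
  proof (rule ccontr)
    assume "\<not> (\<exists>x\<in>Z i. \<exists>y\<in>Z i. f2_deriv \<gamma> a x \<noteq> f2_deriv \<gamma> a y)"
    then have "{x \<in> Z i. f2_deriv \<gamma> a x = f2_deriv \<gamma> a x0} = Z i"
      using x0 by blast
    then show False
      using card_deriv_par_map_fibre_le[OF i a Z_subset_blockV, of "f2_deriv \<gamma> a x0"] big by simp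
  qed
qed

text \<open>Otherwise two derivatives of gamma in direction w at points of Z i differ by a nonzero
  vector of W1' \<inter> V_i; but W1' \<inter> V_i is trivial, being the image of W1 \<inter> V_i.\<close>
lemma comp_W1_eq_vzero:
  assumes i: "i < b" and not_block: "\<not> blockV m i \<subseteq> W1" and w: "w \<in> W1"
  shows "comp m w i = vzero"
proof (rule ccontr)
  assume w_i: "comp m w i \<noteq> vzero"
  have "W1 \<inter> blockV m i = {vzero}"
    using blockV_subset_W1_if_nonzero[OF i] not_block f2_subspace_vzero[OF W(1)] by auto
  then have W1'_i: "W1' \<inter> blockV m i = {vzero}"
    using par_map_Int_blockV[OF i f2_subspace_subset[OF W(1)]] par_map_W1 par_map_vzero by simp
  obtain x y where xy: "x \<in> Z i" "y \<in> Z i" "f2_deriv \<gamma> w x \<noteq> f2_deriv \<gamma> w y"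
    using deriv_par_map_not_constant_on_Z[OF i w_i] by blast
  let ?e = "vadd (f2_deriv \<gamma> w x) (f2_deriv \<gamma> w y)"
  have "?e \<in> W1'"
    using xy(1,2) deriv_par_map_in_W1'[OF _ _ w] f2_subspace_vadd[OF W'(1)] unfolding Z_def by simp
  moreover have "?e \<in> blockV m i"
    using vadd_deriv_par_map_in_blockV[OF i] xy(1,2) Z_subset_blockV by blast
  moreover have "?e \<noteq> vzero"
    using xy(3) by (simp add: vadd_eq_vzero_iff)
  ultimately show False
    using W1'_i by blast
qed

lemma W1_eq_wall: "W1 = vecs ({i. i < b \<and> blockV m i \<subseteq> W1} \<times> {..<m})"
proof
  show "vecs ({i. i < b \<and> blockV m i \<subseteq> W1} \<times> {..<m}) \<subseteq> W1"
    by (rule wall_subset_if_blockV_subset[OF W(1)]) auto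
  have I: "{i. i < b \<and> blockV m i \<subseteq> W1} \<subseteq> {..<b}"
    by auto
  show "W1 \<subseteq> vecs ({i. i < b \<and> blockV m i \<subseteq> W1} \<times> {..<m})"
  proof
    fix w assume w: "w \<in> W1"
    then have "w \<in> VV m b"
      using f2_subspace_subset[OF W(1)] by (rule rev_subsetD)
    then show "w \<in> vecs ({i. i < b \<and> blockV m i \<subseteq> W1} \<times> {..<m})"
      using comp_W1_eq_vzero w by (simp add: mem_wall_iff[OF I])
  qed
qed

lemma is_wall_W1: "is_wall m b W1"
  unfolding is_wall_def
proof (intro exI conjI)
  let ?I = "{i. i < b \<and> blockV m i \<subseteq> W1}"
  show "W1 = vecs (?I \<times> {..<m})"
    by (rule W1_eq_wall)
  show "?I \<noteq> {}"
  proof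
    assume "?I = {}"
    then have "W1 = vecs ({} \<times> {..<m})"
      using W1_eq_wall by (simp only:)
    then have "W1 = {vzero}"
      by (simp add: vecs_empty)
    then show False
      using W1_neq_vzero_if_nontrivial[OF nontrivial par_map_U_neq_U']
      by blast
  qed
  show "?I \<subset> {..<b}"
  proof -
    obtain v where "v \<in> VV m b" "v \<notin> U"
      using f2_hyperplane_proper[OF hyperplane_U] by blast
    then have "?I \<noteq> {..<b}"
      using W1_eq_wall W(2) by auto
    then show ?thesis
      by auto
  qed
qed

end

theorem corollary3p13:
  fixes m b :: nat
    and g :: "nat \<Rightarrow> (nat \<Rightarrow> bool) \<Rightarrow> (nat \<Rightarrow> bool)"
    and U U' W1 W2 W1' W2' :: "(nat \<times> nat \<Rightarrow> bool) set"
  assumes m: "m > 1" and b: "b > 1"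
    and perm: "\<forall>i<b. bij_betw (g i) (vecs {..<m}) (vecs {..<m})"
    and zero: "par_map m b g vzero = vzero"
    and U: "f2_subspace ({..<b} \<times> {..<m}) U" "f2_dim U = m * b - 1"
    and U': "f2_subspace ({..<b} \<times> {..<m}) U'" "f2_dim U' = m * b - 1"
    and J: "J_set m b U \<inter> J_set m b U' = {}"
    and outside: "\<forall>i<b. i \<notin> J_set m b U \<union> J_set m b U' \<longrightarrow>
        (\<exists>r. r < m \<and> diff_uniform m (g i) (2 ^ r) \<and> strongly_anti_invariant m (g i) (r - 1))"
    and inside: "\<forall>j\<in>J_set m b U \<union> J_set m b U'.
        (\<exists>r. r < m - 1 \<and> diff_uniform m (g j) (2 ^ r) \<and> strongly_anti_invariant m (g j) r)"
    and W: "f2_subspace ({..<b} \<times> {..<m}) W1" "W1 \<subseteq> U"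
           "f2_subspace ({..<b} \<times> {..<m}) W2" "W2 \<subseteq> U"
    and W': "f2_subspace ({..<b} \<times> {..<m}) W1'" "W1' \<subseteq> U'"
           "f2_subspace ({..<b} \<times> {..<m}) W2'" "W2' \<subseteq> U'"
    and nontriv: "\<not> trivial_partition (VV m b) (LA m b U' W1' W2')"
    and maps: "maps_onto (par_map m b g) (LA m b U W1 W2) (LA m b U' W1' W2')"
  shows "is_wall m b W1 \<and> is_wall m b W2 \<and> is_wall m b W1' \<and> is_wall m b W2'
    \<and> W1 = W1' \<and> W1' = W2 \<and> W2 = W2'
    \<and> LA m b U W1 W2 = lin_part m b W1 \<and> LA m b U' W1' W2' = lin_part m b W1'"
proof -
  interpret sbox_setting m b g U U' W1 W2 W1' W2'
    using assms by unfold_locales auto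
  obtain I where I: "I \<subseteq> {..<b}" "W1 = vecs (I \<times> {..<m})"
    using is_wall_W1 unfolding is_wall_def by blast
  have "W1' = W1" "W2' = W1" "W2 = W1"
    using walls_eq_if_W1_wall[OF I par_map_U_neq_U'] by auto
  moreover have "LA m b U W1 W1 = lin_part m b W1" "LA m b U' W1 W1 = lin_part m b W1"
    using LA_eq_lin_part[OF U(1) coordinates_nonempty dim_hyperplanes(1)]
      LA_eq_lin_part[OF U'(1) coordinates_nonempty dim_hyperplanes(2)] by auto
  ultimately show ?thesis
    using is_wall_W1 by simp
qed

end
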